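(* Let $A$ be a finite abelian group, let $H$ be a subgroup of $A$, let $A_2$ be the Sylow $2$-subgroup of $A$ and $H_2$ the Sylow $2$-subgroup of $H$. If $\Gamma_{A,H}$ admits a perfect code, then $\Gamma_{A_2,H_2}$ admits a perfect code.
   Context: Abelian groups are written additively with identity $0$. For a subgroup $H$ of a finite abelian group $A$, the subgroup sum graph $\Gamma_{A,H}$ is the simple undirected graph with vertex set $A$ in which distinct vertices $x,y$ are adjacent if and only if $x+y\in H\setminus\{0\}$. A perfect code in a graph is a set $C$ of vertices that is independent and such that every vertex not in $C$ is adjacent to exactly one vertex of $C$. *)

theory Defs
  imports "HOL-Algebra.Algebra"
begin

text \<open>The abelian group A is written multiplicatively (HOL-Algebra comm_group);
  the group operation plays the role of the paper's addition, the unit that of 0.\<close>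

definition sum_adj :: "('a, 'b) monoid_scheme \<Rightarrow> 'a set \<Rightarrow> 'a \<Rightarrow> 'a \<Rightarrow> bool" where
  "sum_adj G H x y \<longleftrightarrow> x \<noteq> y \<and> x \<otimes>\<^bsub>G\<^esub> y \<in> H \<and> x \<otimes>\<^bsub>G\<^esub> y \<noteq> \<one>\<^bsub>G\<^esub>"

definition perfect_code :: "'a set \<Rightarrow> ('a \<Rightarrow> 'a \<Rightarrow> bool) \<Rightarrow> 'a set \<Rightarrow> bool" where
  "perfect_code V adj C \<longleftrightarrow> C \<subseteq> V \<and> (\<forall>x\<in>C. \<forall>y\<in>C. \<not> adj x y)
     \<and> (\<forall>v\<in>V - C. \<exists>!c. c \<in> C \<and> adj v c)"

definition sum_graph_has_perfect_code :: "('a, 'b) monoid_scheme \<Rightarrow> 'a set \<Rightarrow> 'a set \<Rightarrow> bool" where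
  "sum_graph_has_perfect_code G V H \<longleftrightarrow> (\<exists>C. perfect_code V (sum_adj G H) C)"

definition sylow_subgroup :: "('a, 'b) monoid_scheme \<Rightarrow> nat \<Rightarrow> 'a set \<Rightarrow> 'a set \<Rightarrow> bool" where
  "sylow_subgroup G p S P \<longleftrightarrow> subgroup P G \<and> P \<subseteq> S \<and> card P = p ^ multiplicity p (card S)"

end

theory Submission
  imports Defs
begin

text \<open>Written multiplicatively: if the subgroup sum graph on a finite abelian group has a perfect
  code and \<open>card H \<ge> 3\<close>, then every \<open>a\<close> with \<open>a\<^sup>2 \<in> H\<close> has a partner \<open>x\<close> with \<open>x\<^sup>2 = \<one>\<close> and
  \<open>a x \<in> H\<close>. Conversely, if \<open>card K \<le> 2\<close> or such partners exist inside a subgroup \<open>V\<close>, the graph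
  on \<open>V\<close> has a perfect code: \<open>V\<close> splits into the classes \<open>V \<inter> (v K \<union> v\<inverse> K)\<close>, which no edge
  leaves, and each class has the perfect code \<open>{x}\<close> for an involution \<open>x\<close> in it, or else
  \<open>{v, v\<inverse>}\<close>. For the Sylow \<open>2\<close>-subgroups, a partner \<open>x\<close> of \<open>a \<in> A\<^sub>2\<close> in the whole group makes
  \<open>a x\<close> an element of \<open>2\<close>-power order in \<open>H\<close>, hence \<open>a x \<in> H\<^sub>2\<close> and \<open>x \<in> A\<^sub>2\<close>.\<close>

section \<open>Elements of prime-power order lie in Sylow subgroups\<close>

lemma (in group) subgroup_nat_pow_closed:
  assumes "subgroup P G" "x \<in> P"
  shows "x [^] (n::nat) \<in> P"
  using subgroup_int_pow_closed[OF assms, of "int n"] by (simp add: int_pow_int)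

lemma (in group) pow_card_subgroup_eq_one:
  assumes "subgroup P G" "x \<in> P"
  shows "x [^] card P = \<one>"
proof -
  have "x [^]\<^bsub>G\<lparr>carrier := P\<rparr>\<^esub> order (G\<lparr>carrier := P\<rparr>) = \<one>\<^bsub>G\<lparr>carrier := P\<rparr>\<^esub>"
    using group.pow_order_eq_1[OF subgroup.subgroup_is_group[OF assms(1) is_group]] assms(2) by simp
  then show ?thesis
    using nat_pow_consistent by (simp add: order_def)
qed

lemma (in group) mem_of_pow_mem_coprime:
  fixes m q :: nat
  assumes "subgroup P G" "x \<in> carrier G" "x [^] m \<in> P" "x [^] q = \<one>" "coprime m q"
  shows "x \<in> P"
proof (cases "m = 0")
  case True
  with assms(5) have "q = 1"
    by simp
  with assms(1,2,4) show ?thesis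
    by (simp add: subgroup.one_closed)
next
  case False
  then obtain u v where uv: "m * u = q * v + 1"
    using bezout_nat[of m q] assms(5) by auto
  have "(x [^] m) [^] u = x [^] (q * v + 1)"
    using assms(2) by (simp add: nat_pow_pow uv)
  also have "\<dots> = (x [^] q) [^] v \<otimes> x"
    using assms(2) by (simp add: nat_pow_mult[symmetric] nat_pow_pow)
  also have "\<dots> = x"
    using assms(2,4) by simp
  finally show ?thesis
    using subgroup_nat_pow_closed[OF assms(1,3), of u] by simp
qed

lemma (in normal) pow_card_rcosets_mem:
  assumes "x \<in> carrier G"
  shows "x [^] card (rcosets H) \<in> H"
proof -
  have "H #> x \<in> carrier (G Mod H)"
    using assms by (auto simp: FactGroup_def RCOSETS_def)
  then have "(H #> x) [^]\<^bsub>G Mod H\<^esub> card (rcosets H) = H"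
    using group.pow_order_eq_1[OF factorgroup_is_group]
    by (simp add: order_def FactGroup_def)
  then have "H #> (x [^] card (rcosets H)) = H"
    by (simp add: FactGroup_pow[OF assms])
  then show ?thesis
    using rcos_self[OF nat_pow_closed[OF assms] subgroup_axioms, of "card (rcosets H)"] by simp
qed

lemma (in comm_group) subgroup_is_comm_group:
  assumes "subgroup S G"
  shows "comm_group (G\<lparr>carrier := S\<rparr>)"
  using subgroup.subgroup_is_group[OF assms is_group] subgroup.mem_carrier[OF assms]
  by (auto intro: group.group_comm_groupI simp: m_comm)

lemma (in comm_group) sylow_subgroup_mem:
  assumes "Factorial_Ring.prime (p::nat)" "subgroup S G" "finite S" "sylow_subgroup G p S P"
    and "h \<in> S" "h [^] (p ^ n) = \<one>"
  shows "h \<in> P"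
proof -
  let ?S = "G\<lparr>carrier := S\<rparr>"
  interpret S: comm_group ?S
    using subgroup_is_comm_group[OF assms(2)] .
  have P: "subgroup P G" "P \<subseteq> S" "card P = p ^ multiplicity p (card S)"
    using assms(4) by (auto simp: sylow_subgroup_def)
  have P_normal: "P \<lhd> ?S"
    using S.subgroup_imp_normal[OF subgroup_incl[OF P(1) assms(2) P(2)]] .
  define m where "m = card (rcosets\<^bsub>?S\<^esub> P)"
  have "h [^]\<^bsub>?S\<^esub> m \<in> P"
    using normal.pow_card_rcosets_mem[OF P_normal] assms(5) by (simp add: m_def)
  then have "h [^] m \<in> P"
    using nat_pow_consistent by simp
  have "m * card P = card S"
    using S.lagrange[OF normal_imp_subgroup[OF P_normal]] by (simp add: m_def order_def)
  then have "m = card S div p ^ multiplicity p (card S)"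
    using P(3) assms(1) by (metis nonzero_mult_div_cancel_right power_not_zero not_prime_0)
  moreover have "card S > 0"
    using assms(3) subgroup.one_closed[OF assms(2)] card_gt_0_iff by blast
  ultimately have "\<not> p dvd m"
    using multiplicity_decompose[of "card S" p] assms(1) by (metis not_prime_unit not_gr0)
  then have "coprime m (p ^ n)"
    using prime_imp_coprime[OF assms(1)] by (simp add: coprime_commute)
  then show ?thesis
    using mem_of_pow_mem_coprime[OF P(1) _ \<open>h [^] m \<in> P\<close> assms(6)]
      subgroup.mem_carrier[OF assms(2,5)] by blast
qed

section \<open>Perfect codes in subgroup sum graphs\<close>

lemma perfect_code_UN_classes:
  assumes self: "\<And>v. v \<in> V \<Longrightarrow> v \<in> cls v"
    and cls_eq: "\<And>v w. v \<in> V \<Longrightarrow> w \<in> cls v \<Longrightarrow> cls w = cls v"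
    and cls_subset: "\<And>v. v \<in> V \<Longrightarrow> cls v \<subseteq> V"
    and adj_cls: "\<And>v w. v \<in> V \<Longrightarrow> w \<in> V \<Longrightarrow> adj v w \<Longrightarrow> w \<in> cls v"
    and code: "\<And>v. v \<in> V \<Longrightarrow> perfect_code (cls v) adj (code (cls v))"
  shows "perfect_code V adj (\<Union>v\<in>V. code (cls v))"
proof -
  have code_subset: "code (cls v) \<subseteq> cls v" if "v \<in> V" for v
    using code[OF that] by (simp add: perfect_code_def)
  have code_V: "c \<in> V" and code_cls: "cls c = cls v" if "v \<in> V" "c \<in> code (cls v)" for v c
    using that code_subset cls_subset cls_eq by blast+
  have adj_code: "c \<in> code (cls v)" if "v \<in> V" "x \<in> cls v" "w \<in> V" "c \<in> code (cls w)" "adj x c"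
    for v w x c
  proof -
    have "x \<in> V" "cls x = cls v"
      using that(1,2) cls_subset cls_eq by blast+
    then have "c \<in> cls v"
      using adj_cls[OF _ code_V[OF that(3,4)] that(5)] by simp
    then have "cls w = cls v"
      using code_cls[OF that(3,4)] cls_eq[OF that(1)] by simp
    with that(4) show ?thesis by simp
  qed
  have indep: "\<not> adj x y" if "v \<in> V" "x \<in> code (cls v)" "w \<in> V" "y \<in> code (cls w)"
    for v w x y
  proof
    assume "adj x y"
    then have "y \<in> code (cls v)"
      using adj_code[OF that(1) _ that(3,4)] code_subset[OF that(1)] that(2) by blast
    with that(1,2) \<open>adj x y\<close> code[OF that(1)] show False
      by (simp add: perfect_code_def)
  qed
  have dom: "\<exists>!c. c \<in> (\<Union>v\<in>V. code (cls v)) \<and> adj u c"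
    if u: "u \<in> V" "u \<notin> (\<Union>v\<in>V. code (cls v))" for u
  proof -
    have "u \<in> cls u - code (cls u)"
      using self u by blast
    then have "\<exists>!c. c \<in> code (cls u) \<and> adj u c"
      using code[OF u(1)] unfolding perfect_code_def by blast
    then obtain c where c: "c \<in> code (cls u)" "adj u c"
      and unique: "\<And>c'. c' \<in> code (cls u) \<Longrightarrow> adj u c' \<Longrightarrow> c' = c"
      by blast
    show ?thesis
    proof (rule ex1I)
      show "c \<in> (\<Union>v\<in>V. code (cls v)) \<and> adj u c"
        using c u(1) by blast
    next
      fix c' assume "c' \<in> (\<Union>v\<in>V. code (cls v)) \<and> adj u c'"
      then obtain w where "w \<in> V" "c' \<in> code (cls w)" "adj u c'"
        by blast
      then show "c' = c"
        using unique adj_code[OF u(1) self[OF u(1)]] by blast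
    qed
  qed
  show ?thesis
    unfolding perfect_code_def using code_V indep dom by (intro conjI ballI) auto
qed

definition has_involution_partners :: "('a, 'b) monoid_scheme \<Rightarrow> 'a set \<Rightarrow> 'a set \<Rightarrow> bool" where
  "has_involution_partners G V K \<longleftrightarrow>
     (\<forall>a\<in>V. a \<otimes>\<^bsub>G\<^esub> a \<in> K \<longrightarrow> (\<exists>x\<in>V. a \<otimes>\<^bsub>G\<^esub> x \<in> K \<and> x \<otimes>\<^bsub>G\<^esub> x = \<one>\<^bsub>G\<^esub>))"

text \<open>The set \<open>V \<inter> (v K \<union> v\<inverse> K)\<close>; edges of the subgroup sum graph never leave it.\<close>
definition sum_class :: "('a, 'b) monoid_scheme \<Rightarrow> 'a set \<Rightarrow> 'a set \<Rightarrow> 'a \<Rightarrow> 'a set" where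
  "sum_class G V K v = {y \<in> V. inv\<^bsub>G\<^esub> v \<otimes>\<^bsub>G\<^esub> y \<in> K \<or> v \<otimes>\<^bsub>G\<^esub> y \<in> K}"

context comm_group
begin

lemma m_inv_cancel:
  assumes "x \<in> carrier G" "y \<in> carrier G" "z \<in> carrier G"
  shows "x \<otimes> (inv x \<otimes> y) = y" "x \<otimes> (y \<otimes> inv x) = y"
    "x \<otimes> (y \<otimes> (inv x \<otimes> z)) = y \<otimes> z" "x \<otimes> (y \<otimes> (z \<otimes> inv x)) = y \<otimes> z"
  using assms by (simp_all add: m_lcomm[of x] m_assoc[symmetric] m_comm[of _ "inv x"])

context
  fixes V K
  assumes V: "subgroup V G" and K: "subgroup K G"
begin

lemma sum_class_carrier: "y \<in> sum_class G V K v \<Longrightarrow> y \<in> carrier G"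
  using subgroup.mem_carrier[OF V] by (auto simp: sum_class_def)

lemma sum_class_self: "v \<in> V \<Longrightarrow> v \<in> sum_class G V K v"
  using subgroup.mem_carrier[OF V] subgroup.one_closed[OF K] by (simp add: sum_class_def)

lemma sum_class_sym:
  assumes "v \<in> V" "w \<in> sum_class G V K v"
  shows "v \<in> sum_class G V K w"
proof -
  have vw: "v \<in> carrier G" "w \<in> carrier G" "inv v \<otimes> w \<in> K \<or> v \<otimes> w \<in> K"
    using assms sum_class_carrier subgroup.mem_carrier[OF V] by (auto simp: sum_class_def)
  have "inv w \<otimes> v = inv (inv v \<otimes> w)" "w \<otimes> v = v \<otimes> w"
    using vw by (simp_all add: m_ac inv_mult m_inv_cancel)
  with vw assms show ?thesis
    by (auto simp: sum_class_def subgroup.m_inv_closed[OF K])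
qed

lemma sum_class_trans:
  assumes "v \<in> V" "w \<in> sum_class G V K v" "y \<in> sum_class G V K w"
  shows "y \<in> sum_class G V K v"
proof -
  have c: "v \<in> carrier G" "w \<in> carrier G" "y \<in> carrier G" "y \<in> V"
    using assms sum_class_carrier subgroup.mem_carrier[OF V] by (auto simp: sum_class_def)
  have "inv v \<otimes> y = (inv v \<otimes> w) \<otimes> (inv w \<otimes> y)" "v \<otimes> y = inv (inv v \<otimes> w) \<otimes> (w \<otimes> y)"
    "v \<otimes> y = (v \<otimes> w) \<otimes> (inv w \<otimes> y)" "inv v \<otimes> y = inv (v \<otimes> w) \<otimes> (w \<otimes> y)"
    using c by (simp_all add: m_ac inv_mult m_inv_cancel)
  moreover have "inv v \<otimes> w \<in> K \<or> v \<otimes> w \<in> K" "inv w \<otimes> y \<in> K \<or> w \<otimes> y \<in> K"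
    using assms by (auto simp: sum_class_def)
  ultimately have "inv v \<otimes> y \<in> K \<or> v \<otimes> y \<in> K"
    using subgroup.m_closed[OF K] subgroup.m_inv_closed[OF K] by metis
  with c show ?thesis
    by (simp add: sum_class_def)
qed

lemma sum_class_eq:
  assumes "v \<in> V" "w \<in> sum_class G V K v"
  shows "sum_class G V K w = sum_class G V K v"
proof -
  have "w \<in> V"
    using assms(2) by (simp add: sum_class_def)
  show ?thesis
  proof
    show "sum_class G V K w \<subseteq> sum_class G V K v"
      using sum_class_trans[OF assms] by blast
    show "sum_class G V K v \<subseteq> sum_class G V K w"
      using sum_class_trans[OF \<open>w \<in> V\<close> sum_class_sym[OF assms]] by blast
  qed
qed

lemma sum_class_inv:
  assumes "v \<in> V" "y \<in> sum_class G V K v"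
  shows "inv y \<in> sum_class G V K v"
proof -
  have c: "v \<in> carrier G" "y \<in> carrier G" "y \<in> V"
    using assms sum_class_carrier subgroup.mem_carrier[OF V] by (auto simp: sum_class_def)
  have "inv v \<otimes> inv y = inv (v \<otimes> y)" "v \<otimes> inv y = inv (inv v \<otimes> y)"
    using c by (simp_all add: m_ac inv_mult)
  moreover have "inv v \<otimes> y \<in> K \<or> v \<otimes> y \<in> K"
    using assms by (simp add: sum_class_def)
  ultimately show ?thesis
    using c subgroup.m_inv_closed[OF K] subgroup.m_inv_closed[OF V] by (auto simp: sum_class_def)
qed

lemma sum_adj_imp_sum_class: "w \<in> V \<Longrightarrow> sum_adj G K v w \<Longrightarrow> w \<in> sum_class G V K v"
  by (simp add: sum_class_def sum_adj_def)

lemma sum_class_perfect_code_involution: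
  assumes "v \<in> V" "x \<in> sum_class G V K v" "x \<otimes> x = \<one>"
  shows "perfect_code (sum_class G V K v) (sum_adj G K) {x}"
proof -
  have x: "x \<in> carrier G" "inv x = x"
    using assms sum_class_carrier inv_equality by blast+
  have "sum_adj G K y x" if "y \<in> sum_class G V K v" "y \<noteq> x" for y
  proof -
    have "y \<in> sum_class G V K x"
      using sum_class_eq[OF assms(1,2)] that(1) by simp
    then have "y \<otimes> x \<in> K"
      using x sum_class_carrier[OF that(1)] by (auto simp: sum_class_def m_comm)
    moreover have "y \<otimes> x \<noteq> \<one>"
      using that inv_equality[of y x] sum_class_carrier x by auto
    ultimately show ?thesis
      using that(2) by (simp add: sum_adj_def)
  qed
  with assms(2) show ?thesis
    by (auto simp: perfect_code_def sum_adj_def)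
qed

text \<open>Without an involution in the class, a vertex adjacent to both \<open>v\<close> and \<open>v\<inverse>\<close> would
  force \<open>v\<^sup>2 \<in> K\<close> and three distinct elements \<open>\<one>, y v, y v\<inverse>\<close> of \<open>K\<close>.\<close>
lemma sum_class_perfect_code_inverse_pair:
  assumes "finite K" "card K \<le> 2 \<or> has_involution_partners G V K" "v \<in> V"
    and no_involution: "\<forall>x\<in>sum_class G V K v. x \<otimes> x \<noteq> \<one>"
  shows "perfect_code (sum_class G V K v) (sum_adj G K) {v, inv v}"
proof -
  have v: "v \<in> sum_class G V K v" "inv v \<in> sum_class G V K v" "v \<in> carrier G"
    using sum_class_self sum_class_inv sum_class_carrier assms(3) by blast+
  have v_ne_inv: "v \<noteq> inv v"
    using no_involution v r_inv by metis
  have "\<exists>!c. c \<in> {v, inv v} \<and> sum_adj G K y c" if y: "y \<in> sum_class G V K v - {v, inv v}" for y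
  proof -
    have y_carrier: "y \<in> carrier G"
      using y sum_class_carrier by blast
    have adj_v: "sum_adj G K y v \<longleftrightarrow> y \<otimes> v \<in> K"
      using y v y_carrier inv_equality[of y v] by (auto simp: sum_adj_def)
    have adj_inv_v: "sum_adj G K y (inv v) \<longleftrightarrow> y \<otimes> inv v \<in> K"
      using y v y_carrier inv_equality[of y "inv v"] by (auto simp: sum_adj_def)
    have "y \<otimes> inv v \<in> K \<or> y \<otimes> v \<in> K"
      using y v y_carrier by (auto simp: sum_class_def m_comm)
    moreover have "\<not> (y \<otimes> v \<in> K \<and> y \<otimes> inv v \<in> K)"
    proof
      assume both: "y \<otimes> v \<in> K \<and> y \<otimes> inv v \<in> K"
      have "v \<otimes> v = (y \<otimes> v) \<otimes> inv (y \<otimes> inv v)"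
        using v y_carrier by (simp add: m_ac inv_mult m_inv_cancel)
      then have "v \<otimes> v \<in> K"
        using both subgroup.m_closed[OF K] subgroup.m_inv_closed[OF K] by simp
      then have "card K \<le> 2"
        using assms(2,3) no_involution by (force simp: has_involution_partners_def sum_class_def)
      moreover have "{\<one>, y \<otimes> v, y \<otimes> inv v} \<subseteq> K"
        using both subgroup.one_closed[OF K] by blast
      moreover have "card {\<one>, y \<otimes> v, y \<otimes> inv v} = 3"
        using adj_v adj_inv_v both v_ne_inv y_carrier v by (auto simp: sum_adj_def)
      ultimately show False
        using card_mono[OF assms(1), of "{\<one>, y \<otimes> v, y \<otimes> inv v}"] by linarith
    qed
    ultimately show ?thesis
      using adj_v adj_inv_v v_ne_inv by auto
  qed
  moreover have "\<not> sum_adj G K c c'" if "c \<in> {v, inv v}" "c' \<in> {v, inv v}" for c c'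
    using that v by (auto simp: sum_adj_def)
  ultimately show ?thesis
    using v by (auto simp: perfect_code_def)
qed

lemma sum_graph_has_perfect_code_if_involution_partners:
  assumes "finite K" "card K \<le> 2 \<or> has_involution_partners G V K"
  shows "sum_graph_has_perfect_code G V K"
proof -
  define code where "code B = (SOME C. perfect_code B (sum_adj G K) C)" for B
  have class_code: "perfect_code (sum_class G V K v) (sum_adj G K) (code (sum_class G V K v))"
    if "v \<in> V" for v
  proof -
    have "\<exists>C. perfect_code (sum_class G V K v) (sum_adj G K) C"
      using sum_class_perfect_code_involution[OF that]
        sum_class_perfect_code_inverse_pair[OF assms that] by blast
    then show ?thesis
      unfolding code_def by (rule someI_ex)
  qed
  have "perfect_code V (sum_adj G K) (\<Union>v\<in>V. code (sum_class G V K v))"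
  proof (rule perfect_code_UN_classes[where cls = "sum_class G V K" and code = code])
    show "sum_class G V K v \<subseteq> V" for v
      by (auto simp: sum_class_def)
    show "v \<in> sum_class G V K v" if "v \<in> V" for v
      using sum_class_self[OF that] .
    show "sum_class G V K w = sum_class G V K v" if "v \<in> V" "w \<in> sum_class G V K v" for v w
      using sum_class_eq[OF that] .
    show "w \<in> sum_class G V K v" if "v \<in> V" "w \<in> V" "sum_adj G K v w" for v w
      using sum_adj_imp_sum_class[OF that(2,3)] .
  qed (rule class_code)
  then show ?thesis
    unfolding sum_graph_has_perfect_code_def ..
qed

end

context
  fixes H a
  assumes H: "subgroup H G" and a: "a \<in> carrier G" "a \<otimes> a \<in> H"
begin

lemma square_coset_mult:
  assumes "y \<in> carrier G" "z \<in> carrier G" "a \<otimes> y \<in> H" "a \<otimes> z \<in> H"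
  shows "y \<otimes> z \<in> H"
proof -
  have "y \<otimes> z = (a \<otimes> y) \<otimes> (a \<otimes> z) \<otimes> inv (a \<otimes> a)"
    using assms a by (simp add: m_ac inv_mult m_inv_cancel)
  then show ?thesis
    using assms a(2) H by (simp add: subgroup.m_closed subgroup.m_inv_closed)
qed

lemma square_coset_inv:
  assumes "y \<in> carrier G" "a \<otimes> y \<in> H"
  shows "a \<otimes> inv y \<in> H"
proof -
  have "a \<otimes> inv y = inv (a \<otimes> y) \<otimes> (a \<otimes> a)"
    using assms a by (simp add: m_ac inv_mult m_inv_cancel)
  then show ?thesis
    using assms a(2) H by (simp add: subgroup.m_closed subgroup.m_inv_closed)
qed

lemma square_coset_closed:
  assumes "y \<in> carrier G" "c \<in> carrier G" "a \<otimes> y \<in> H" "y \<otimes> c \<in> H"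
  shows "a \<otimes> c \<in> H"
proof -
  have "a \<otimes> c = inv (a \<otimes> y) \<otimes> (a \<otimes> a) \<otimes> (y \<otimes> c)"
    using assms a by (simp add: m_ac inv_mult m_inv_cancel)
  then show ?thesis
    using assms a(2) H by (simp add: subgroup.m_closed subgroup.m_inv_closed)
qed

lemma square_coset_sum_adj:
  assumes "y \<in> carrier G" "z \<in> carrier G" "a \<otimes> y \<in> H" "a \<otimes> z \<in> H" "y \<noteq> z" "y \<noteq> inv z"
  shows "sum_adj G H y z"
proof -
  have "y \<otimes> z \<noteq> \<one>"
    using inv_equality[of y z] assms(1,2,6) by auto
  then show ?thesis
    using square_coset_mult[OF assms(1-4)] assms(5) by (simp add: sum_adj_def)
qed

lemma square_coset_avoiding_two:
  assumes "3 \<le> card H"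
  obtains y where "y \<in> carrier G" "a \<otimes> y \<in> H" "y \<noteq> b" "y \<noteq> b'"
proof -
  have "card {a \<otimes> b, a \<otimes> b'} \<le> 2"
    by (simp add: card_insert_if)
  then have "\<not> H \<subseteq> {a \<otimes> b, a \<otimes> b'}"
    using assms card_mono[of "{a \<otimes> b, a \<otimes> b'}" H] by auto
  then obtain k where k: "k \<in> H" "k \<noteq> a \<otimes> b" "k \<noteq> a \<otimes> b'"
    by blast
  have "a \<otimes> (inv a \<otimes> k) = k"
    using subgroup.mem_carrier[OF H k(1)] a by (simp add: m_inv_cancel)
  then have "a \<otimes> (inv a \<otimes> k) \<in> H" "inv a \<otimes> k \<noteq> b" "inv a \<otimes> k \<noteq> b'"
    using k by auto
  moreover have "inv a \<otimes> k \<in> carrier G"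
    using subgroup.mem_carrier[OF H k(1)] a by simp
  ultimately show ?thesis
    using that by blast
qed

lemma perfect_code_meets_square_coset:
  assumes "perfect_code (carrier G) (sum_adj G H) C"
  obtains c where "c \<in> C" "a \<otimes> c \<in> H"
proof (cases "inv a \<in> C")
  case True
  with a H show ?thesis
    using that by (simp add: subgroup.one_closed)
next
  case False
  with assms a obtain c where "c \<in> C" "c \<in> carrier G" "sum_adj G H (inv a) c"
    unfolding perfect_code_def by blast
  with a H show ?thesis
    using that square_coset_closed[of "inv a" c] by (simp add: sum_adj_def subgroup.one_closed)
qed

text \<open>Without such a partner the coset \<open>a\<inverse> H\<close> contains no involution, so it is a clique up to
  inverse pairs, of size \<open>card H \<ge> 3\<close>; it meets the code in some \<open>c\<close>, and then a third vertex
  \<open>y\<close> of the coset or the vertex \<open>c\<inverse>\<close> is dominated twice.\<close>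
lemma perfect_code_imp_involution_partner:
  assumes pc: "perfect_code (carrier G) (sum_adj G H) C" and card_H: "3 \<le> card H"
  shows "\<exists>x\<in>carrier G. a \<otimes> x \<in> H \<and> x \<otimes> x = \<one>"
proof (rule ccontr)
  assume no_partner: "\<not> ?thesis"
  from pc have C_carrier: "C \<subseteq> carrier G"
    and indep: "\<And>x y. x \<in> C \<Longrightarrow> y \<in> C \<Longrightarrow> \<not> sum_adj G H x y"
    and dom: "\<And>v. v \<in> carrier G - C \<Longrightarrow> \<exists>!c. c \<in> C \<and> sum_adj G H v c"
    unfolding perfect_code_def by auto
  obtain c where c: "c \<in> C" "a \<otimes> c \<in> H"
    using perfect_code_meets_square_coset[OF pc] .
  have c_carrier: "c \<in> carrier G" and c_ne_inv: "c \<noteq> inv c"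
    using c C_carrier no_partner r_inv by (metis subsetD)+
  have C_coset: "z = c \<or> z = inv c" if "z \<in> C" "a \<otimes> z \<in> H" for z
    using square_coset_sum_adj[OF _ c_carrier that(2) c(2)] indep[OF that(1) c(1)] C_carrier that(1)
    by blast
  obtain y where y: "y \<in> carrier G" "a \<otimes> y \<in> H" "y \<noteq> c" "y \<noteq> inv c"
    using square_coset_avoiding_two[OF card_H] .
  have "y \<notin> C" and adj_c: "sum_adj G H y c"
    using C_coset y square_coset_sum_adj[OF y(1) c_carrier y(2) c(2) y(3)] c_carrier by auto
  show False
  proof (cases "inv c \<in> C")
    case True
    have "sum_adj G H y (inv c)"
      using square_coset_sum_adj[OF y(1) _ y(2) square_coset_inv[OF c_carrier c(2)] y(4)] y(3) c_carrier
      by simp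
    then show False
      using dom[of y] \<open>y \<notin> C\<close> y(1) c(1) True adj_c c_ne_inv by blast
  next
    case False
    then obtain c' where c': "c' \<in> C" "sum_adj G H (inv c) c'"
      using dom[of "inv c"] c_carrier by auto
    then have "a \<otimes> c' \<in> H"
      using square_coset_closed[OF _ _ square_coset_inv[OF c_carrier c(2)]] c_carrier C_carrier
      by (auto simp: sum_adj_def)
    then have "c' = c"
      using C_coset[OF c'(1)] c'(2) by (auto simp: sum_adj_def)
    then show False
      using c'(2) c_carrier by (simp add: sum_adj_def)
  qed
qed

end

end

section \<open>Passing to Sylow \<open>2\<close>-subgroups\<close>

context comm_group
begin

lemma pow_two_power_mult_involution:
  assumes "a \<in> carrier G" "x \<in> carrier G" "a [^] ((2::nat) ^ e) = \<one>" "x \<otimes> x = \<one>"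
  shows "(a \<otimes> x) [^] ((2::nat) ^ Suc e) = \<one>"
proof -
  have "a [^] ((2::nat) ^ Suc e) = (a [^] ((2::nat) ^ e)) [^] (2::nat)"
    using assms(1) by (simp add: nat_pow_pow mult.commute)
  moreover have "x [^] ((2::nat) ^ Suc e) = (x [^] (2::nat)) [^] ((2::nat) ^ e)"
    using assms(2) by (simp add: nat_pow_pow)
  moreover have "x [^] (2::nat) = x \<otimes> x"
    using assms(2) by (simp add: numeral_2_eq_2)
  ultimately show ?thesis
    using assms by (simp add: nat_pow_distrib)
qed

lemma sylow_subgroup_subset:
  assumes "Factorial_Ring.prime (p::nat)" "finite (carrier G)" "subgroup H G"
    and "sylow_subgroup G p (carrier G) P" "sylow_subgroup G p H Q"
  shows "Q \<subseteq> P"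
proof
  fix h
  assume "h \<in> Q"
  have Q: "subgroup Q G" "card Q = p ^ multiplicity p (card H)"
    using assms(5) by (auto simp: sylow_subgroup_def)
  then have "h [^] (p ^ multiplicity p (card H)) = \<one>"
    using pow_card_subgroup_eq_one[OF Q(1) \<open>h \<in> Q\<close>] by simp
  then show "h \<in> P"
    using sylow_subgroup_mem[OF assms(1) subgroup_self assms(2,4)]
      subgroup.mem_carrier[OF Q(1) \<open>h \<in> Q\<close>] by blast
qed

lemma sylow_two_mult_involution_mem:
  assumes fin: "finite (carrier G)" and H: "subgroup H G"
    and A2: "sylow_subgroup G 2 (carrier G) A2" and H2: "sylow_subgroup G 2 H H2"
    and a: "a \<in> A2" and x: "x \<in> carrier G" "a \<otimes> x \<in> H" "x \<otimes> x = \<one>"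
  shows "a \<otimes> x \<in> H2" "x \<in> A2"
proof -
  have A2_props: "subgroup A2 G" "card A2 = 2 ^ multiplicity 2 (card (carrier G))"
    using A2 by (auto simp: sylow_subgroup_def)
  have a_carrier: "a \<in> carrier G"
    using subgroup.mem_carrier[OF A2_props(1) a] .
  have fin_H: "finite H"
    using fin subgroup.subset[OF H] finite_subset by blast
  have "a [^] ((2::nat) ^ multiplicity 2 (card (carrier G))) = \<one>"
    using pow_card_subgroup_eq_one[OF A2_props(1) a] A2_props(2) by simp
  then show ax: "a \<otimes> x \<in> H2"
    using sylow_subgroup_mem[OF two_is_prime_nat H fin_H H2 x(2)]
      pow_two_power_mult_involution a_carrier x by blast
  have "x = inv a \<otimes> (a \<otimes> x)"
    using a_carrier x(1) by (simp add: m_assoc[symmetric])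
  then show "x \<in> A2"
    using sylow_subgroup_subset[OF two_is_prime_nat fin H A2 H2] ax a
      subgroup.m_closed[OF A2_props(1)] subgroup.m_inv_closed[OF A2_props(1)] by (metis subsetD)
qed

lemma sylow_two_involution_partners:
  assumes fin: "finite (carrier G)" and H: "subgroup H G"
    and A2: "sylow_subgroup G 2 (carrier G) A2" and H2: "sylow_subgroup G 2 H H2"
    and C: "perfect_code (carrier G) (sum_adj G H) C"
  shows "card H2 \<le> 2 \<or> has_involution_partners G A2 H2"
proof (cases "card H2 \<le> 2")
  case False
  have "H2 \<subseteq> H" "A2 \<subseteq> carrier G"
    using A2 H2 subgroup.subset by (auto simp: sylow_subgroup_def)
  moreover have "finite H"
    using fin subgroup.subset[OF H] finite_subset by blast
  ultimately have "3 \<le> card H"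
    using card_mono[of H H2] False by linarith
  have "\<exists>x\<in>A2. a \<otimes> x \<in> H2 \<and> x \<otimes> x = \<one>" if a: "a \<in> A2" "a \<otimes> a \<in> H2" for a
  proof -
    obtain x where x: "x \<in> carrier G" "a \<otimes> x \<in> H" "x \<otimes> x = \<one>"
      using perfect_code_imp_involution_partner[OF H _ _ C \<open>3 \<le> card H\<close>] a \<open>H2 \<subseteq> H\<close>
        \<open>A2 \<subseteq> carrier G\<close> by blast
    then show ?thesis
      using sylow_two_mult_involution_mem[OF fin H A2 H2 a(1) x] by blast
  qed
  then show ?thesis
    by (simp add: has_involution_partners_def)
qed simp

end

theorem proposition3p4:
  fixes G :: "('a, 'b) monoid_scheme" and H A2 H2 :: "'a set"
  assumes "comm_group G"
    and "finite (carrier G)"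
    and "subgroup H G"
    and "sylow_subgroup G 2 (carrier G) A2"
    and "sylow_subgroup G 2 H H2"
    and "sum_graph_has_perfect_code G (carrier G) H"
  shows "sum_graph_has_perfect_code G A2 H2"
proof -
  interpret comm_group G by fact
  obtain C where C: "perfect_code (carrier G) (sum_adj G H) C"
    using assms(6) by (auto simp: sum_graph_has_perfect_code_def)
  have "subgroup A2 G" "subgroup H2 G"
    using assms(4,5) by (auto simp: sylow_subgroup_def)
  moreover have "finite H2"
    using assms(2) subgroup.subset[OF \<open>subgroup H2 G\<close>] finite_subset by blast
  ultimately show ?thesis
    using sum_graph_has_perfect_code_if_involution_partners
      sylow_two_involution_partners[OF assms(2-5) C] by blast
qed

end
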